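(* Let $k_1,k_2$ be natural numbers with $k_2>k_1$, let $\alpha>0$, and let $f(t)=\sum_{k\ge1}f_kt^k$ (with $f_1\neq0$) be a Pólya frequency power series. If for some positive integer $n$ it holds that $\alpha^{k_2-k_1}f_{k_1-n+1}>f_{k_2-n+1}$ (where $f_j=0$ for $j\le0$), then the quasi-Riordan array $\left[\frac1{1-\alpha t},f(t)\right]$ is not totally positive, although both $\frac1{1-\alpha t}$ and $f(t)$ are Pólya frequency power series.
   Context: For formal power series $g(t)=\sum_{n\ge0}g_nt^n$ with $g_0=1$ and $f(t)=\sum_{n\ge1}f_nt^n$ with $f_1\ne0$, the quasi-Riordan array $[g,f]$ is the infinite lower triangular matrix $(r_{n,k})_{n,k\ge0}$ with $r_{n,0}=g_n$ and $r_{n,k}=f_{n-k+1}$ for $k\ge1$ (with $f_j=0$ for $j\le0$), i.e. its columns have generating functions $g,f,tf,t^2f,\dots$. An infinite matrix is totally positive (TP) if all its minors are nonnegative. A sequence $(a_n)_{n\ge0}$ of nonnegative reals is a Pólya frequency sequence if its Toeplitz matrix $[a_{i-j}]_{i,j\ge0}$ (with $a_m=0$ for $m<0$) is TP; a formal power series is a Pólya frequency power series if its coefficient sequence is a Pólya frequency sequence. *)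

theory Defs
  imports "HOL-Computational_Algebra.Formal_Power_Series" "Jordan_Normal_Form.Determinant"
begin

definition totally_positive :: "(nat \<Rightarrow> nat \<Rightarrow> real) \<Rightarrow> bool" where
  "totally_positive M \<longleftrightarrow>
     (\<forall>m (r :: nat \<Rightarrow> nat) (c :: nat \<Rightarrow> nat).
        strict_mono_on {..<m} r \<longrightarrow> strict_mono_on {..<m} c \<longrightarrow>
        det (mat m m (\<lambda>(i, j). M (r i) (c j))) \<ge> 0)"

definition toeplitz :: "(nat \<Rightarrow> real) \<Rightarrow> nat \<Rightarrow> nat \<Rightarrow> real" where
  "toeplitz a i j = (if j \<le> i then a (i - j) else 0)"

definition PF_seq :: "(nat \<Rightarrow> real) \<Rightarrow> bool" where
  "PF_seq a \<longleftrightarrow> (\<forall>n. a n \<ge> 0) \<and> totally_positive (toeplitz a)"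

definition PF_fps :: "real fps \<Rightarrow> bool" where
  "PF_fps F \<longleftrightarrow> PF_seq (fps_nth F)"

definition quasi_riordan :: "real fps \<Rightarrow> real fps \<Rightarrow> nat \<Rightarrow> nat \<Rightarrow> real" where
  "quasi_riordan g f n k =
     (if k = 0 then fps_nth g n else if k \<le> n + 1 then fps_nth f (n + 1 - k) else 0)"

definition coeff_int :: "real fps \<Rightarrow> int \<Rightarrow> real" where
  "coeff_int f j = (if j \<le> 0 then 0 else fps_nth f (nat j))"

end

theory Submission
  imports Defs
begin

text \<open>The Toeplitz matrix of \<open>\<alpha>\<^sup>n\<close> is the lower triangular all-ones matrix with row \<open>i\<close> scaled
  by \<open>\<alpha>\<^sup>i\<close> and column \<open>j\<close> by \<open>\<alpha>\<^sup>-\<^sup>j\<close>; every minor of the all-ones matrix is \<open>0\<close> or \<open>1\<close>, so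
  \<open>1/(1 - \<alpha>t)\<close> is a Polya frequency series. On the other hand, the \<open>2 \<times> 2\<close> minor of
  \<open>[1/(1 - \<alpha>t), f]\<close> on rows \<open>k\<^sub>1 < k\<^sub>2\<close> and columns \<open>0 < n\<close> is
  \<open>\<alpha>\<^bsup>k\<^sub>1\<^esup> (f\<^bsub>k\<^sub>2-n+1\<^esub> - \<alpha>\<^bsup>k\<^sub>2-k\<^sub>1\<^esup> f\<^bsub>k\<^sub>1-n+1\<^esub>)\<close>, which the hypothesis makes negative.\<close>

lemma det_mat_scale_rows_cols:
  "det (mat n n (\<lambda>(i, j). x i * y j * b i j)) =
     (\<Prod>i<n. x i) * (\<Prod>j<n. y j) * det (mat n n (\<lambda>(i, j). b i j :: 'a :: comm_ring_1))"
proof -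
  have "det (mat n n (\<lambda>(i, j). x i * y j * b i j)) =
     (\<Sum>p\<in>{p. p permutes {0..<n}}.
        signof p * ((\<Prod>i=0..<n. x i) * (\<Prod>i=0..<n. y (p i)) * (\<Prod>i=0..<n. b i (p i))))"
    by (subst det_def'[of _ n]) (auto intro!: sum.cong simp: prod.distrib)
  also have "\<dots> = (\<Sum>p\<in>{p. p permutes {0..<n}}.
        (\<Prod>i=0..<n. x i) * (\<Prod>i=0..<n. y i) * (signof p * (\<Prod>i=0..<n. b i (p i))))"
    by (intro sum.cong refl)
      (simp add: prod.permute[symmetric, of _ "{0..<n}", simplified comp_def] mult_ac)
  also have "\<dots> = (\<Prod>i<n. x i) * (\<Prod>j<n. y j) * det (mat n n (\<lambda>(i, j). b i j))"
    by (subst det_def'[of _ n]) (auto simp: sum_distrib_left atLeast0LessThan intro!: sum.cong)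
  finally show ?thesis .
qed

lemma det_mat_2:
  "det (mat 2 2 (\<lambda>(i, j). M i j)) = M 0 0 * M 1 1 - M 0 1 * (M 1 0 :: 'a :: comm_ring_1)"
proof -
  let ?A = "mat 2 2 (\<lambda>(i, j). M i j)"
  have "det ?A = (\<Sum>j<2. ?A $$ (0, j) * cofactor ?A 0 j)"
    by (rule laplace_expansion_row) auto
  moreover have "det (mat_delete ?A 0 0) = M 1 1" "det (mat_delete ?A 0 1) = M 1 0"
    by (subst det_single; simp add: mat_delete_def)+
  ultimately show ?thesis
    by (simp add: cofactor_def numeral_2_eq_2)
qed

lemma totally_positive_imp_minor_2_nonneg:
  assumes "totally_positive M" "r\<^sub>0 < r\<^sub>1" "c\<^sub>0 < c\<^sub>1"
  shows "M r\<^sub>0 c\<^sub>1 * M r\<^sub>1 c\<^sub>0 \<le> M r\<^sub>0 c\<^sub>0 * M r\<^sub>1 c\<^sub>1"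
proof -
  define r where "r i = (if i = 0 then r\<^sub>0 else r\<^sub>1)" for i :: nat
  define c where "c j = (if j = 0 then c\<^sub>0 else c\<^sub>1)" for j :: nat
  have "strict_mono_on {..<2} r" "strict_mono_on {..<2} c"
    using assms(2,3) unfolding strict_mono_on_def r_def c_def by auto
  then have "det (mat 2 2 (\<lambda>(i, j). M (r i) (c j))) \<ge> 0"
    using assms(1) unfolding totally_positive_def by blast
  then show ?thesis
    by (simp add: det_mat_2 r_def c_def)
qed

lemma totally_positive_scale_rows_cols:
  assumes "totally_positive M" "\<And>i. x i \<ge> 0" "\<And>j. y j \<ge> 0"
  shows "totally_positive (\<lambda>i j. x i * y j * M i j)"
  unfolding totally_positive_def
proof (intro allI impI)
  fix m and r c :: "nat \<Rightarrow> nat"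
  assume "strict_mono_on {..<m} r" "strict_mono_on {..<m} c"
  then have "det (mat m m (\<lambda>(i, j). M (r i) (c j))) \<ge> 0"
    using assms(1) unfolding totally_positive_def by blast
  then show "det (mat m m (\<lambda>(i, j). x (r i) * y (c j) * M (r i) (c j))) \<ge> 0"
    using assms(2,3)
    by (subst det_mat_scale_rows_cols[where b = "\<lambda>i j. M (r i) (c j)"])
      (intro mult_nonneg_nonneg prod_nonneg; simp)
qed

text \<open>Laplace expansion along the first row: either that row vanishes (\<open>r 0 < c 0\<close>),
  or the first two columns coincide (\<open>c 1 \<le> r 0\<close>), or the row is the first unit vector
  and the minor reduces to the one on rows and columns shifted by one.\<close>

lemma totally_positive_toeplitz_ones: "totally_positive (toeplitz (\<lambda>_. 1))"
  unfolding totally_positive_def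
proof (intro allI impI)
  fix m and r c :: "nat \<Rightarrow> nat"
  assume "strict_mono_on {..<m} r" "strict_mono_on {..<m} c"
  then show "det (mat m m (\<lambda>(i, j). toeplitz (\<lambda>_. 1) (r i) (c j))) \<ge> 0"
  proof (induction m arbitrary: r c)
    case 0
    then show ?case by simp
  next
    case (Suc m)
    define A where "A = mat (Suc m) (Suc m) (\<lambda>(i, j). toeplitz (\<lambda>_. 1) (r i) (c j))"
    have A: "A \<in> carrier_mat (Suc m) (Suc m)" unfolding A_def by simp
    have A_nth: "A $$ (i, j) = (if c j \<le> r i then 1 else 0)" if "i < Suc m" "j < Suc m" for i j
      using that unfolding A_def toeplitz_def by simp
    have c_less: "c i < c j" and r_less: "r i < r j" if "i < j" "j < Suc m" for i j
      using Suc.prems that unfolding strict_mono_on_def by auto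
    have r0_le: "r 0 \<le> r i" and c0_le: "c 0 \<le> c i" if "i < Suc m" for i
      using r_less[of 0 i] c_less[of 0 i] that by (cases i; simp)+
    have laplace: "det A = (\<Sum>j<Suc m. A $$ (0, j) * cofactor A 0 j)"
      by (rule laplace_expansion_row[OF A]) simp
    consider "r 0 < c 0" | "m \<ge> 1" "c 1 \<le> r 0" | "c 0 \<le> r 0" "m \<ge> 1 \<longrightarrow> r 0 < c 1"
      by linarith
    then have "det A \<ge> 0"
    proof cases
      case 1
      then have "A $$ (0, j) = 0" if "j < Suc m" for j
        using c0_le[OF that] that by (simp add: A_nth)
      then show ?thesis by (simp add: laplace)
    next
      case 2
      have "col A 0 = col A 1"
      proof (rule eq_vecI)
        fix i assume "i < dim_vec (col A 1)"
        then have i: "i < Suc m" using A by simp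
        have "c 0 \<le> r i" "c 1 \<le> r i"
          using 2 c_less[of 0 1] r0_le[OF i] by linarith+
        then show "col A 0 $ i = col A 1 $ i" using i 2 A by (simp add: A_nth)
      qed (use A in simp)
      then have "det A = 0" using 2 by (intro det_identical_columns[OF A, of 0 1]) auto
      then show ?thesis by simp
    next
      case 3
      have "A $$ (0, j) = 0" if "j < Suc m" "j \<noteq> 0" for j
        using 3 c_less[of 1 j] that by (cases "j = 1") (auto simp: A_nth)
      then have "det A = A $$ (0, 0) * cofactor A 0 0"
        unfolding laplace by (subst sum.lessThan_Suc_shift) simp
      also have "\<dots> = det (mat_delete A 0 0)"
        using 3 by (simp add: A_nth cofactor_def)
      also have "mat_delete A 0 0 =
          mat m m (\<lambda>(i, j). toeplitz (\<lambda>_. 1) (r (Suc i)) (c (Suc j)))"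
        unfolding A_def mat_delete_def by (rule eq_matI) auto
      also have "det \<dots> \<ge> 0"
        by (rule Suc.IH) (auto simp: strict_mono_on_def intro!: c_less r_less)
      finally show ?thesis .
    qed
    then show ?case unfolding A_def .
  qed
qed

lemma PF_seq_geometric:
  assumes "(a :: real) > 0"
  shows "PF_seq (\<lambda>n. a ^ n)"
  unfolding PF_seq_def
proof
  show "\<forall>n. a ^ n \<ge> 0" using assms by simp
  have "toeplitz (\<lambda>n. a ^ n) = (\<lambda>i j. a ^ i * inverse a ^ j * toeplitz (\<lambda>_. 1) i j)"
    using assms by (auto simp: fun_eq_iff toeplitz_def power_diff power_inverse divide_inverse)
  then show "totally_positive (toeplitz (\<lambda>n. a ^ n))"
    using assms by (simp add: totally_positive_scale_rows_cols totally_positive_toeplitz_ones)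
qed

lemma inverse_one_minus_const_X: "inverse (1 - fps_const (a :: real) * fps_X) = Abs_fps (\<lambda>n. a ^ n)"
  using one_minus_const_fps_X_neg_power'[of 1 a] by simp

lemma quasi_riordan_eq_coeff_int:
  assumes "fps_nth f 0 = 0" "k \<ge> 1"
  shows "quasi_riordan g f n k = coeff_int f (int n - int k + 1)"
  using assms unfolding quasi_riordan_def coeff_int_def
  by (auto simp: nat_diff_distrib' intro!: arg_cong[where f = "fps_nth f"])

theorem proposition4p1:
  fixes k1 k2 n :: nat and \<alpha> :: real and f :: "real fps"
  assumes "k2 > k1" and "\<alpha> > 0"
    and "fps_nth f 0 = 0" and "fps_nth f 1 \<noteq> 0" and "PF_fps f"
    and "n \<ge> 1"
    and "\<alpha> ^ (k2 - k1) * coeff_int f (int k1 - int n + 1) > coeff_int f (int k2 - int n + 1)"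
  shows "\<not> totally_positive (quasi_riordan (inverse (1 - fps_const \<alpha> * fps_X)) f)
         \<and> PF_fps (inverse (1 - fps_const \<alpha> * fps_X)) \<and> PF_fps f"
proof (intro conjI)
  let ?Q = "quasi_riordan (inverse (1 - fps_const \<alpha> * fps_X)) f"
  define C1 where "C1 = coeff_int f (int k1 - int n + 1)"
  define C2 where "C2 = coeff_int f (int k2 - int n + 1)"
  show "\<not> totally_positive ?Q"
  proof
    assume "totally_positive ?Q"
    then have "?Q k1 n * ?Q k2 0 \<le> ?Q k1 0 * ?Q k2 n"
      using assms(1,6) by (intro totally_positive_imp_minor_2_nonneg) auto
    moreover have "?Q k 0 = \<alpha> ^ k" for k
      by (simp add: quasi_riordan_def inverse_one_minus_const_X)
    moreover have "\<alpha> ^ k2 = \<alpha> ^ k1 * \<alpha> ^ (k2 - k1)"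
      using assms(1) by (simp flip: power_add)
    ultimately have "\<alpha> ^ k1 * (\<alpha> ^ (k2 - k1) * C1) \<le> \<alpha> ^ k1 * C2"
      using assms(3,6) by (simp add: quasi_riordan_eq_coeff_int C1_def C2_def mult_ac)
    then show False
      using assms(2,7) unfolding C1_def C2_def by simp
  qed
  show "PF_fps (inverse (1 - fps_const \<alpha> * fps_X))"
    using PF_seq_geometric[OF assms(2)] by (simp add: PF_fps_def inverse_one_minus_const_X Abs_fps_inverse)
  show "PF_fps f" by fact
qed

end
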